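(* There is a numerical constant $C>0$ such that for all $\delta\in[0,1]$, $h\in(0,1/2]$ and $(u,w)\in\mathcal A_\delta$, \[ h^2\log\frac1h\le C\,E_h(u,w). \]
   Context: Let $B_1=\{x\in\mathbb R^2:|x|<1\}$. For scalar functions $u,w$ on $(0,1)$ define $U(x)=\frac12(u(|x|)-|x|)\frac{x}{|x|}$ and $W(x)=w(|x|)$. For $\delta\in[0,1]$ let $\mathcal A_\delta$ be the set of pairs $(u,w)$ with $(U,W)\in W^{1,2}(B_1;\mathbb R^2)\times W^{2,2}(B_1)$, $w(0)=0$, $w(1)=1-\delta$. For $h>0$, \[ E_h(u,w)=\int_0^1\frac{u^2}{r}+r(u'+w'^2-1)^2+h^2\Big(rw''^2+\frac{w'^2}{r}\Big)dr . \] *)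

theory Defs
  imports "HOL-Analysis.Analysis"
begin

fun Ck :: "nat \<Rightarrow> ('a::euclidean_space \<Rightarrow> real) \<Rightarrow> bool" where
  "Ck 0 f = continuous_on UNIV f"
| "Ck (Suc k) f = ((\<forall>x. f differentiable (at x)) \<and>
      (\<forall>b\<in>Basis. Ck k (\<lambda>x. frechet_derivative f (at x) b)))"

definition smooth_fun :: "('a::euclidean_space \<Rightarrow> real) \<Rightarrow> bool" where
  "smooth_fun f \<longleftrightarrow> (\<forall>k. Ck k f)"

definition test_fun :: "'a::euclidean_space set \<Rightarrow> ('a \<Rightarrow> real) \<Rightarrow> bool" where
  "test_fun S \<phi> \<longleftrightarrow> smooth_fun \<phi> \<and> compact (closure {x. \<phi> x \<noteq> 0})
      \<and> closure {x. \<phi> x \<noteq> 0} \<subseteq> S"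

definition loc_integrable_on :: "'a::euclidean_space set \<Rightarrow> ('a \<Rightarrow> real) \<Rightarrow> bool" where
  "loc_integrable_on S f \<longleftrightarrow>
     (\<forall>K. compact K \<and> K \<subseteq> S \<longrightarrow> integrable (lebesgue_on K) f)"

definition weak_deriv :: "'a::euclidean_space set \<Rightarrow> ('a \<Rightarrow> real) \<Rightarrow> 'a \<Rightarrow> ('a \<Rightarrow> real) \<Rightarrow> bool" where
  "weak_deriv S f b g \<longleftrightarrow> loc_integrable_on S f \<and> loc_integrable_on S g \<and>
     (\<forall>\<phi>. test_fun S \<phi> \<longrightarrow>
        (LINT x|lebesgue_on S. f x * frechet_derivative \<phi> (at x) b)
          = - (LINT x|lebesgue_on S. g x * \<phi> x))"

definition L2_on :: "'a::euclidean_space set \<Rightarrow> ('a \<Rightarrow> real) \<Rightarrow> bool" where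
  "L2_on S f \<longleftrightarrow> f \<in> borel_measurable (lebesgue_on S) \<and> integrable (lebesgue_on S) (\<lambda>x. (f x)\<^sup>2)"

definition W12 :: "'a::euclidean_space set \<Rightarrow> ('a \<Rightarrow> real) \<Rightarrow> bool" where
  "W12 S f \<longleftrightarrow> L2_on S f \<and> (\<forall>b\<in>Basis. \<exists>g. L2_on S g \<and> weak_deriv S f b g)"

definition W22 :: "'a::euclidean_space set \<Rightarrow> ('a \<Rightarrow> real) \<Rightarrow> bool" where
  "W22 S f \<longleftrightarrow> L2_on S f \<and> (\<forall>b\<in>Basis. \<exists>g. W12 S g \<and> weak_deriv S f b g)"

definition W12_vec :: "'a::euclidean_space set \<Rightarrow> ('a \<Rightarrow> 'b::euclidean_space) \<Rightarrow> bool" where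
  "W12_vec S F \<longleftrightarrow> (\<forall>c\<in>Basis. W12 S (\<lambda>x. F x \<bullet> c))"

definition B1 :: "(real^2) set" where "B1 = ball 0 1"

definition Ufield :: "(real \<Rightarrow> real) \<Rightarrow> real^2 \<Rightarrow> real^2" where
  "Ufield u x = ((u (norm x) - norm x) / (2 * norm x)) *\<^sub>R x"

definition Wfield :: "(real \<Rightarrow> real) \<Rightarrow> real^2 \<Rightarrow> real" where
  "Wfield w x = w (norm x)"

text \<open>Admissible set A_delta. The pointwise values w(0), w(1) refer to the continuous
  representative of w on [0,1] (W in W^{2,2}(B_1) embeds into C(closure B_1)).\<close>
definition admissible :: "real \<Rightarrow> (real \<Rightarrow> real) \<Rightarrow> (real \<Rightarrow> real) \<Rightarrow> bool" where
  "admissible \<delta> u w \<longleftrightarrow> W12_vec B1 (Ufield u) \<and> W22 B1 (Wfield w)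
     \<and> continuous_on {0..1} w \<and> w 0 = 0 \<and> w 1 = 1 - \<delta>"

text \<open>The energy E_h(u,w), with u', w', w'' given as (one-dimensional weak) derivatives
  u1, w1, w2 on (0,1); value in [0,\<infinity>].\<close>
definition energy :: "real \<Rightarrow> (real \<Rightarrow> real) \<Rightarrow> (real \<Rightarrow> real) \<Rightarrow> (real \<Rightarrow> real)
    \<Rightarrow> (real \<Rightarrow> real) \<Rightarrow> (real \<Rightarrow> real) \<Rightarrow> ennreal" where
  "energy h u w u1 w1 w2 = (\<integral>\<^sup>+ r. ennreal ((u r)\<^sup>2 / r + r * (u1 r + (w1 r)\<^sup>2 - 1)\<^sup>2
        + h\<^sup>2 * (r * (w2 r)\<^sup>2 + (w1 r)\<^sup>2 / r)) \<partial>(lebesgue_on {0<..<1}))"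

end

theory Submission
  imports Defs "HOL-Computational_Algebra.Polynomial"
begin

text \<open>Test the weak derivative of \<open>u\<close> against \<open>\<Phi>(r) = \<theta>(r) r / (r\<^sup>2 + a\<^sup>2)\<close> with
  \<open>a = h/4\<close>, where \<open>\<theta>\<close> is a smooth cutoff equal to 1 on \<open>[2a, 1/2]\<close> and vanishing outside
  \<open>[a, 3/4]\<close> (built from \<open>exp (-1/x)\<close>). Then \<open>\<integral> \<Phi> - u' \<Phi> - u \<Phi>' = \<integral> \<Phi> \<ge> log (1/h) / 2\<close>,
  because \<open>\<Phi> \<ge> 1/(2r)\<close> on \<open>[h/2, 1/2]\<close>. Writing the integrand as
  \<open>\<Phi> w'\<^sup>2 - \<Phi> (u' + w'\<^sup>2 - 1) - u \<Phi>'\<close> and using \<open>\<Phi> \<le> 1/r\<close>, \<open>|\<Phi>'| \<le> C/r\<^sup>2\<close>, the first term is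
  bounded by the bending term \<open>w'\<^sup>2/r\<close>, and Young's inequality bounds the other two by
  \<open>h\<^sup>-\<^sup>2\<close> times the stretching terms plus \<open>O(h\<^sup>2/r\<^sup>3)\<close>, whose integral over \<open>[a, 3/4]\<close>
  is \<open>O(1)\<close>. Admissibility (the boundary values of
  \<open>w\<close>) and the weak derivative \<open>w''\<close> play no role.\<close>

subsection \<open>Smooth functions of one real variable\<close>

lemma Ck_Suc_real_iff:
  "Ck (Suc k) (f::real \<Rightarrow> real) \<longleftrightarrow>
     (\<forall>x. f differentiable (at x)) \<and> Ck k (\<lambda>x. frechet_derivative f (at x) 1)"
  by (simp add: Basis_real_def)

lemma frechet_derivative_real:
  assumes "(f has_real_derivative d) (at x)"
  shows "frechet_derivative f (at x) 1 = d"
proof -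
  have "(f has_derivative (*) d) (at x)"
    using assms has_field_derivative_imp_has_derivative by blast
  then have "(*) d = frechet_derivative f (at x)" by (rule frechet_derivative_at)
  then show ?thesis by (metis mult.right_neutral)
qed

lemma Ck_SucI_real:
  assumes "\<And>x. (f has_real_derivative f' x) (at x)" "Ck k f'"
  shows "Ck (Suc k) f"
proof -
  have "(\<lambda>x. frechet_derivative f (at x) 1) = f'"
    using frechet_derivative_real assms(1) by blast
  moreover have "\<forall>x. f differentiable (at x)"
    using assms(1) real_differentiable_def by blast
  ultimately show ?thesis using assms(2) by (simp add: Ck_Suc_real_iff)
qed

lemma Ck_SucE_real:
  assumes "Ck (Suc k) (f::real \<Rightarrow> real)"
  obtains f' where "\<And>x. (f has_real_derivative f' x) (at x)" "Ck k f'"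
proof -
  have d: "\<forall>x. f differentiable (at x)"
    and c: "Ck k (\<lambda>x. frechet_derivative f (at x) 1)"
    using assms by (auto simp: Ck_Suc_real_iff)
  have D: "(f has_real_derivative deriv f x) (at x)" for x
    using d DERIV_deriv_iff_real_differentiable by blast
  then have "(\<lambda>x. frechet_derivative f (at x) 1) = deriv f"
    using frechet_derivative_real by blast
  with D c show ?thesis by (intro that) auto
qed

lemma Ck_Suc_imp_Ck: "Ck (Suc k) (f::real \<Rightarrow> real) \<Longrightarrow> Ck k f"
proof (induction k arbitrary: f)
  case 0
  then have "\<forall>x. f differentiable (at x)" by (simp add: Ck_Suc_real_iff)
  then show ?case
    by (simp add: differentiable_imp_continuous_within continuous_at_imp_continuous_on)
next
  case (Suc k)
  obtain f' where "\<And>x. (f has_real_derivative f' x) (at x)" "Ck (Suc k) f'"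
    using Suc.prems by (rule Ck_SucE_real) blast
  then show ?case using Suc.IH by (blast intro: Ck_SucI_real)
qed

lemma Ck_imp_continuous: "Ck k (f::real \<Rightarrow> real) \<Longrightarrow> continuous_on UNIV f"
  by (induction k) (simp_all only: Ck.simps(1) Ck_Suc_imp_Ck)

lemma Ck_Suc_continuous_deriv:
  assumes "Ck (Suc k) f" "\<And>x. (f has_real_derivative f' x) (at x)"
  shows "continuous_on UNIV f'"
proof -
  obtain g where g: "\<And>x. (f has_real_derivative g x) (at x)" "Ck k g"
    using assms(1) by (rule Ck_SucE_real) blast
  have "g = f'" using g(1) assms(2) DERIV_unique by (metis ext)
  then show ?thesis using g(2) Ck_imp_continuous by blast
qed

lemma Ck_const: "Ck k (\<lambda>x::real. c::real)"
proof (induction k arbitrary: c)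
  case (Suc k) show ?case by (rule Ck_SucI_real[of _ "\<lambda>x. 0"]) (auto intro: Suc)
qed simp

lemma Ck_id: "Ck k (\<lambda>x::real. x)"
proof (cases k)
  case (Suc j) show ?thesis unfolding Suc by (rule Ck_SucI_real[of _ "\<lambda>x. 1"]) (auto intro: Ck_const)
qed (simp add: continuous_on_id)

lemma Ck_add: "Ck k f \<Longrightarrow> Ck k g \<Longrightarrow> Ck k (\<lambda>x::real. f x + g x)"
proof (induction k arbitrary: f g)
  case (Suc k)
  obtain f' where f': "\<And>x. (f has_real_derivative f' x) (at x)" "Ck k f'"
    using Suc.prems(1) by (rule Ck_SucE_real) blast
  obtain g' where g': "\<And>x. (g has_real_derivative g' x) (at x)" "Ck k g'"
    using Suc.prems(2) by (rule Ck_SucE_real) blast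
  show ?case
    by (rule Ck_SucI_real[of _ "\<lambda>x. f' x + g' x"]) (use f' g' Suc.IH in \<open>auto intro: DERIV_add\<close>)
qed (simp add: continuous_on_add)

lemma Ck_mult: "Ck k f \<Longrightarrow> Ck k g \<Longrightarrow> Ck k (\<lambda>x::real. f x * g x)"
proof (induction k arbitrary: f g)
  case (Suc k)
  obtain f' where f': "\<And>x. (f has_real_derivative f' x) (at x)" "Ck k f'"
    using Suc.prems(1) by (rule Ck_SucE_real) blast
  obtain g' where g': "\<And>x. (g has_real_derivative g' x) (at x)" "Ck k g'"
    using Suc.prems(2) by (rule Ck_SucE_real) blast
  have "Ck k f" "Ck k g" using Suc.prems Ck_Suc_imp_Ck by blast+
  show ?case
  proof (rule Ck_SucI_real[of _ "\<lambda>x. f' x * g x + f x * g' x"])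
    show "((\<lambda>x. f x * g x) has_real_derivative f' x * g x + f x * g' x) (at x)" for x
      using DERIV_mult[OF f'(1) g'(1)] by (simp add: mult.commute)
    show "Ck k (\<lambda>x. f' x * g x + f x * g' x)"
      using Ck_add Suc.IH f'(2) g'(2) \<open>Ck k f\<close> \<open>Ck k g\<close> by blast
  qed
qed (simp add: continuous_on_mult)

lemma Ck_comp: "Ck k f \<Longrightarrow> Ck k p \<Longrightarrow> Ck k (\<lambda>x::real. f (p x))"
proof (induction k arbitrary: f p)
  case 0 then show ?case
    by simp (metis continuous_on_compose2 subset_UNIV)
next
  case (Suc k)
  obtain f' where f': "\<And>x. (f has_real_derivative f' x) (at x)" "Ck k f'"
    using Suc.prems(1) by (rule Ck_SucE_real) blast
  obtain p' where p': "\<And>x. (p has_real_derivative p' x) (at x)" "Ck k p'"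
    using Suc.prems(2) by (rule Ck_SucE_real) blast
  have "Ck k p" using Suc.prems Ck_Suc_imp_Ck by blast
  show ?case
  proof (rule Ck_SucI_real[of _ "\<lambda>x. f' (p x) * p' x"])
    show "((\<lambda>x. f (p x)) has_real_derivative f' (p x) * p' x) (at x)" for x
      using f' p' DERIV_chain2 by blast
    show "Ck k (\<lambda>x. f' (p x) * p' x)"
      using Ck_mult Suc.IH f'(2) p'(2) \<open>Ck k p\<close> by blast
  qed
qed

lemma Ck_affine: "Ck k (\<lambda>x::real. m * x + c)"
  by (intro Ck_add Ck_mult Ck_const Ck_id)

lemma Ck_inverse: "Ck k f \<Longrightarrow> (\<And>x. f x \<noteq> 0) \<Longrightarrow> Ck k (\<lambda>x::real. inverse (f x))"
proof (induction k arbitrary: f)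
  case (Suc k)
  obtain f' where f': "\<And>x. (f has_real_derivative f' x) (at x)" "Ck k f'"
    using Suc.prems(1) by (rule Ck_SucE_real) blast
  have inv: "Ck k (\<lambda>x. inverse (f x))"
    using Suc.IH Suc.prems Ck_Suc_imp_Ck by blast
  show ?case
  proof (rule Ck_SucI_real[of _ "\<lambda>x. (-1) * f' x * (inverse (f x) * inverse (f x))"])
    show "((\<lambda>x. inverse (f x)) has_real_derivative
            (-1) * f' x * (inverse (f x) * inverse (f x))) (at x)" for x
      using DERIV_inverse_fun[OF f'(1) Suc.prems(2)] by (simp add: power2_eq_square)
    show "Ck k (\<lambda>x. (-1) * f' x * (inverse (f x) * inverse (f x)))"
      by (intro Ck_mult Ck_const f' inv)
  qed
qed (simp add: continuous_on_inverse)

subsection \<open>A smooth step function\<close>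

definition flat_exp :: "real poly \<Rightarrow> real \<Rightarrow> real" where
  "flat_exp P x = (if 0 < x then poly P (inverse x) * exp (- inverse x) else 0)"

definition flat_exp_deriv_poly :: "real poly \<Rightarrow> real poly" where
  "flat_exp_deriv_poly P = [:0, 0, 1:] * (P - pderiv P)"

lemma poly_times_exp_neg_tendsto_0:
  "((\<lambda>y. y ^ n * poly P y * exp (- y)) \<longlongrightarrow> (0::real)) at_top"
proof (induction P arbitrary: n rule: pCons_induct)
  case (pCons a p)
  have "((\<lambda>y. a * (y ^ n / exp y) + y ^ Suc n * poly p y * exp (- y)) \<longlongrightarrow> a * 0 + 0) at_top"
    by (intro tendsto_intros tendsto_power_div_exp_0 pCons.IH)
  moreover have "(\<lambda>y. y ^ n * poly (pCons a p) y * exp (- y)) =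
      (\<lambda>y. a * (y ^ n / exp y) + y ^ Suc n * poly p y * exp (- y))"
    by (auto simp: exp_minus field_simps)
  ultimately show ?case by simp
qed simp

lemma poly_inverse_times_exp_tendsto_0:
  "((\<lambda>x. poly P (inverse x) * exp (- inverse x)) \<longlongrightarrow> (0::real)) (at_right 0)"
  using filterlim_compose[OF poly_times_exp_neg_tendsto_0[of 0 P] filterlim_inverse_at_top_right]
  by (simp add: o_def)

lemma flat_exp_has_derivative_pos:
  assumes "0 < x"
  shows "((\<lambda>x. poly P (inverse x) * exp (- inverse x)) has_real_derivative
           poly (flat_exp_deriv_poly P) (inverse x) * exp (- inverse x)) (at x)"
proof -
  have "((\<lambda>x. poly P (inverse x) * exp (- inverse x)) has_real_derivative
      poly (pderiv P) (inverse x) * (- inverse (x\<^sup>2)) * exp (- inverse x) +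
      poly P (inverse x) * (exp (- inverse x) * inverse (x\<^sup>2))) (at x)"
    using assms
    by (intro DERIV_mult' DERIV_chain2[OF poly_DERIV] derivative_eq_intros)
       (auto simp: power2_eq_square)
  then show ?thesis
    by (simp add: flat_exp_deriv_poly_def algebra_simps power2_eq_square field_simps)
qed

lemma flat_exp_has_derivative:
  "(flat_exp P has_real_derivative flat_exp (flat_exp_deriv_poly P) x) (at x)"
proof (cases x "0::real" rule: linorder_cases)
  case greater
  have "((\<lambda>x. poly P (inverse x) * exp (- inverse x)) has_real_derivative
      flat_exp (flat_exp_deriv_poly P) x) (at x)"
    using flat_exp_has_derivative_pos[OF greater] greater by (simp add: flat_exp_def)
  then show ?thesis
    by (rule has_field_derivative_transform_within_open[where S="{0<..}"])
       (use greater in \<open>auto simp: flat_exp_def\<close>)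
next
  case less
  have "((\<lambda>x. 0) has_real_derivative flat_exp (flat_exp_deriv_poly P) x) (at x)"
    using less by (simp add: flat_exp_def)
  then show ?thesis
    by (rule has_field_derivative_transform_within_open[where S="{..<0}"])
       (use less in \<open>auto simp: flat_exp_def\<close>)
next
  case equal
  have "((\<lambda>y. (flat_exp P y - flat_exp P 0) / (y - 0)) \<longlongrightarrow> 0) (at 0)"
  proof (rule filterlim_split_at)
    have "eventually (\<lambda>y. 0 = (flat_exp P y - flat_exp P 0) / (y - 0)) (at_left (0::real))"
      by (auto simp: flat_exp_def eventually_at_left_field intro!: exI[of _ "-1"])
    then show "((\<lambda>y. (flat_exp P y - flat_exp P 0) / (y - 0)) \<longlongrightarrow> 0) (at_left 0)"
      by (rule Lim_transform_eventually[OF tendsto_const])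
    \<comment> \<open>on the right the difference quotient is again of the form poly (1/y) * exp (-1/y)\<close>
    have "eventually (\<lambda>y. poly (pCons 0 P) (inverse y) * exp (- inverse y)
        = (flat_exp P y - flat_exp P 0) / (y - 0)) (at_right (0::real))"
      by (auto simp: flat_exp_def eventually_at_right_field divide_inverse mult_ac
          intro!: exI[of _ 1])
    then show "((\<lambda>y. (flat_exp P y - flat_exp P 0) / (y - 0)) \<longlongrightarrow> 0) (at_right 0)"
      by (rule Lim_transform_eventually[OF poly_inverse_times_exp_tendsto_0])
  qed
  then show ?thesis
    using equal by (simp add: has_field_derivative_iff flat_exp_def)
qed

lemma Ck_flat_exp: "Ck k (flat_exp P)"
proof (induction k arbitrary: P)
  case 0
  show ?case
    using flat_exp_has_derivative DERIV_isCont continuous_at_imp_continuous_on by simp blast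
qed (rule Ck_SucI_real[OF flat_exp_has_derivative])

lemma flat_exp_1: "flat_exp 1 x = (if 0 < x then exp (- inverse x) else 0)"
  by (simp add: flat_exp_def)

definition smooth_step :: "real \<Rightarrow> real" where
  "smooth_step x = flat_exp 1 x / (flat_exp 1 x + flat_exp 1 (1 - x))"

definition smooth_step' :: "real \<Rightarrow> real" where
  "smooth_step' = deriv smooth_step"

lemma smooth_step_denom_pos: "0 < flat_exp 1 x + flat_exp 1 (1 - x)"
  by (cases "0 < x") (auto simp: flat_exp_1 add_pos_nonneg add_nonneg_pos)

lemma Ck_smooth_step: "Ck k smooth_step"
proof -
  have "Ck k (\<lambda>x. flat_exp 1 ((-1) * x + 1))"
    by (rule Ck_comp[OF Ck_flat_exp Ck_affine])
  then have "Ck k (\<lambda>x. flat_exp 1 x * inverse (flat_exp 1 x + flat_exp 1 (1 - x)))"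
    using smooth_step_denom_pos
    by (intro Ck_mult Ck_flat_exp Ck_inverse Ck_add) (auto simp: less_le)
  then show ?thesis by (simp add: smooth_step_def[abs_def] divide_inverse)
qed

lemma smooth_step_eq_0: "x \<le> 0 \<Longrightarrow> smooth_step x = 0"
  by (simp add: smooth_step_def flat_exp_1)

lemma smooth_step_eq_1: "1 \<le> x \<Longrightarrow> smooth_step x = 1"
  by (simp add: smooth_step_def flat_exp_1)

lemma smooth_step_bounds: "0 \<le> smooth_step x" "smooth_step x \<le> 1"
  using smooth_step_denom_pos[of x]
  by (auto simp: smooth_step_def flat_exp_1 field_simps)

lemma smooth_step_has_derivative: "(smooth_step has_real_derivative smooth_step' x) (at x)"
proof -
  obtain f' where "\<And>x. (smooth_step has_real_derivative f' x) (at x)"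
    using Ck_smooth_step[of "Suc 0"] by (rule Ck_SucE_real) blast
  then show ?thesis unfolding smooth_step'_def by (metis DERIV_imp_deriv)
qed

lemma smooth_step'_eq_0:
  assumes "x < 0 \<or> 1 < x"
  shows "smooth_step' x = 0"
proof -
  have "(smooth_step has_real_derivative 0) (at x)"
    using assms
  proof
    assume "x < 0"
    then show ?thesis
      by (intro has_field_derivative_transform_within_open[OF DERIV_const, where S="{..<0}"])
         (auto simp: smooth_step_eq_0)
  next
    assume "1 < x"
    then show ?thesis
      by (intro has_field_derivative_transform_within_open[OF DERIV_const, where S="{1<..}"])
         (auto simp: smooth_step_eq_1)
  qed
  then show ?thesis using smooth_step_has_derivative DERIV_unique by blast
qed

lemma smooth_step'_bounded: obtains B where "\<And>x. \<bar>smooth_step' x\<bar> \<le> B"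
proof -
  have "continuous_on UNIV smooth_step'"
    by (rule Ck_Suc_continuous_deriv[OF Ck_smooth_step[of "Suc 0"] smooth_step_has_derivative])
  then have "compact (smooth_step' ` {0..1})"
    by (rule compact_continuous_image[OF continuous_on_subset]) auto
  then obtain B where B: "\<forall>y\<in>smooth_step' ` {0..1}. \<bar>y\<bar> \<le> B"
    using compact_imp_bounded bounded_iff by (metis real_norm_def)
  have "\<bar>smooth_step' x\<bar> \<le> B" for x
  proof (cases "x \<in> {0..1}")
    case False
    then show ?thesis using smooth_step'_eq_0[of x] B[rule_format, of "smooth_step' 0"] by auto
  qed (use B in auto)
  then show ?thesis using that by blast
qed

subsection \<open>The test function\<close>

definition reg_inverse :: "real \<Rightarrow> real \<Rightarrow> real" where
  "reg_inverse a r = r / (r\<^sup>2 + a\<^sup>2)"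

definition reg_inverse' :: "real \<Rightarrow> real \<Rightarrow> real" where
  "reg_inverse' a r = (a\<^sup>2 - r\<^sup>2) / (r\<^sup>2 + a\<^sup>2)\<^sup>2"

definition cutoff :: "real \<Rightarrow> real \<Rightarrow> real" where
  "cutoff a r = smooth_step (r / a - 1) * smooth_step (3 - 4 * r)"

definition cutoff' :: "real \<Rightarrow> real \<Rightarrow> real" where
  "cutoff' a r = smooth_step' (r / a - 1) / a * smooth_step (3 - 4 * r)
     - 4 * smooth_step (r / a - 1) * smooth_step' (3 - 4 * r)"

definition test_weight :: "real \<Rightarrow> real \<Rightarrow> real" where
  "test_weight a r = cutoff a r * reg_inverse a r"

definition test_weight' :: "real \<Rightarrow> real \<Rightarrow> real" where
  "test_weight' a r = cutoff' a r * reg_inverse a r + cutoff a r * reg_inverse' a r"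

lemma reg_inverse_has_derivative:
  assumes "0 < a"
  shows "(reg_inverse a has_real_derivative reg_inverse' a r) (at r)"
proof -
  have "0 < r\<^sup>2 + a\<^sup>2" using assms by (simp add: add_nonneg_pos)
  then show ?thesis
    unfolding reg_inverse_def[abs_def] reg_inverse'_def
    by (auto intro!: derivative_eq_intros simp: field_simps power2_eq_square)
qed

lemma cutoff_has_derivative:
  "(cutoff a has_real_derivative cutoff' a r) (at r)"
proof -
  have "((\<lambda>r. smooth_step (r / a - 1)) has_real_derivative smooth_step' (r / a - 1) * (1 / a)) (at r)"
    using DERIV_diff[OF DERIV_cdivide[OF DERIV_ident, of a] DERIV_const[of 1]]
    by (intro DERIV_chain2[OF smooth_step_has_derivative]) simp
  moreover have "((\<lambda>r. smooth_step (3 - 4 * r)) has_real_derivative smooth_step' (3 - 4 * r) * (-4)) (at r)"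
    by (rule DERIV_chain2[OF smooth_step_has_derivative]) (auto intro!: derivative_eq_intros)
  ultimately show ?thesis
    unfolding cutoff_def[abs_def] cutoff'_def
    by (auto intro!: derivative_eq_intros simp: algebra_simps)
qed

lemma test_weight_has_derivative:
  assumes "0 < a"
  shows "(test_weight a has_real_derivative test_weight' a r) (at r)"
  using DERIV_mult'[OF cutoff_has_derivative reg_inverse_has_derivative[OF assms]]
  unfolding test_weight_def[abs_def] test_weight'_def by (simp add: algebra_simps)

lemma Ck_test_weight:
  assumes "0 < a"
  shows "Ck k (test_weight a)"
proof -
  have "Ck k (\<lambda>r. smooth_step ((1 / a) * r + (-1)) * smooth_step ((-4) * r + 3))"
    by (intro Ck_mult Ck_comp[OF Ck_smooth_step Ck_affine])
  then have "Ck k (cutoff a)"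
    by (simp add: cutoff_def[abs_def] field_simps)
  moreover have "Ck k (\<lambda>r. r * inverse (r * r + a * a))"
    using assms by (intro Ck_mult Ck_id Ck_inverse Ck_add Ck_const)
       (smt (verit) mult_pos_pos zero_le_square)
  then have "Ck k (reg_inverse a)"
    by (simp add: reg_inverse_def[abs_def] power2_eq_square divide_inverse)
  ultimately show ?thesis
    unfolding test_weight_def[abs_def] by (rule Ck_mult)
qed

lemma test_weight_eq_0:
  assumes "0 < a" "r < a \<or> 3/4 < r"
  shows "test_weight a r = 0" "test_weight' a r = 0"
proof -
  from assms(2) have "(smooth_step (r / a - 1) = 0 \<and> smooth_step' (r / a - 1) = 0)
      \<or> (smooth_step (3 - 4 * r) = 0 \<and> smooth_step' (3 - 4 * r) = 0)"
  proof
    assume "r < a"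
    then have "r / a - 1 < 0" using assms(1) by (simp add: field_simps)
    then show ?thesis using smooth_step_eq_0 smooth_step'_eq_0 by auto
  next
    assume "3/4 < r"
    then show ?thesis using smooth_step_eq_0 smooth_step'_eq_0 by auto
  qed
  then show "test_weight a r = 0" "test_weight' a r = 0"
    by (auto simp: test_weight_def test_weight'_def cutoff_def cutoff'_def)
qed

lemma test_fun_test_weight:
  assumes "0 < a"
  shows "test_fun {0<..<1} (test_weight a)"
proof -
  have "{x. test_weight a x \<noteq> 0} \<subseteq> {a..3/4}"
    using test_weight_eq_0[OF assms] by (force simp: not_le)
  then have sub: "closure {x. test_weight a x \<noteq> 0} \<subseteq> {a..3/4}"
    by (rule closure_minimal) simp
  then have "compact (closure {x. test_weight a x \<noteq> 0})"
    by (meson compact_Icc compact_imp_bounded bounded_subset closed_closure compact_eq_bounded_closed)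
  moreover have "smooth_fun (test_weight a)"
    unfolding smooth_fun_def using Ck_test_weight[OF assms] by blast
  ultimately show ?thesis
    using sub assms unfolding test_fun_def by auto
qed

lemma reg_inverse_bounds:
  assumes "0 < a" "0 < r"
  shows "0 \<le> reg_inverse a r" "reg_inverse a r \<le> 1 / r"
  using assms by (auto simp: reg_inverse_def field_simps power2_eq_square add_pos_pos)

lemma reg_inverse_ge:
  assumes "0 < a" "a \<le> r"
  shows "1 / (2 * r) \<le> reg_inverse a r"
proof -
  have "a\<^sup>2 \<le> r\<^sup>2" using assms by (simp add: power_mono)
  then have "r\<^sup>2 + a\<^sup>2 \<le> 2 * r\<^sup>2" by simp
  then show ?thesis
    using assms by (simp add: reg_inverse_def field_simps add_pos_pos power2_eq_square)
qed

lemma reg_inverse'_bound: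
  assumes "0 < a" "0 < r"
  shows "\<bar>reg_inverse' a r\<bar> \<le> 1 / r\<^sup>2"
proof -
  have p: "0 < r\<^sup>2 + a\<^sup>2" using assms by (simp add: add_pos_pos)
  have "\<bar>a\<^sup>2 - r\<^sup>2\<bar> / (r\<^sup>2 + a\<^sup>2)\<^sup>2 \<le> (r\<^sup>2 + a\<^sup>2) / (r\<^sup>2 + a\<^sup>2)\<^sup>2"
    using p by (intro divide_right_mono) (auto simp: abs_le_iff)
  also have "\<dots> = 1 / (r\<^sup>2 + a\<^sup>2)" using p by (simp add: power2_eq_square)
  also have "\<dots> \<le> 1 / r\<^sup>2" using p assms by (intro divide_left_mono) auto
  finally show ?thesis by (simp add: reg_inverse'_def)
qed

lemma cutoff_bounds: "0 \<le> cutoff a r" "cutoff a r \<le> 1"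
  using smooth_step_bounds[of "r / a - 1"] smooth_step_bounds[of "3 - 4 * r"]
  by (auto simp: cutoff_def intro: mult_le_one)

lemma cutoff_eq_1:
  assumes "0 < a" "2 * a \<le> r" "r \<le> 1/2"
  shows "cutoff a r = 1"
proof -
  have "1 \<le> r / a - 1" using assms by (simp add: field_simps)
  then show ?thesis using assms by (simp add: cutoff_def smooth_step_eq_1)
qed

lemma cutoff'_bound:
  assumes "0 < a" "0 < r" "r < 1" and B: "\<And>x. \<bar>smooth_step' x\<bar> \<le> B"
  shows "\<bar>cutoff' a r\<bar> \<le> 6 * B / r"
proof -
  have B0: "0 \<le> B" using B[of 0] by simp
  have left: "\<bar>smooth_step' (r / a - 1) / a * smooth_step (3 - 4 * r)\<bar> \<le> 2 * B / r"
  proof (cases "1 < r / a - 1")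
    case True
    then show ?thesis using smooth_step'_eq_0 B0 assms(2) by simp
  next
    case False
    \<comment> \<open>the derivative of the left step is of size 1/a, but only where r \<le> 2a\<close>
    then have "1 / a \<le> 2 / r" using assms by (simp add: field_simps)
    then have "\<bar>smooth_step' (r / a - 1)\<bar> * (1 / a) * smooth_step (3 - 4 * r) \<le> B * (2 / r) * 1"
      using B B0 smooth_step_bounds assms(1,2) by (intro mult_mono) auto
    then show ?thesis using smooth_step_bounds[of "3 - 4 * r"] assms(1) by (simp add: abs_mult mult.commute)
  qed
  have "\<bar>4 * smooth_step (r / a - 1) * smooth_step' (3 - 4 * r)\<bar> \<le> 4 * 1 * B"
    using smooth_step_bounds B by (simp add: abs_mult mult_mono)
  also have "\<dots> \<le> 4 * B / r"
    using assms B0 mult_left_mono[of r 1 B] by (simp add: field_simps)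
  finally show ?thesis using left unfolding cutoff'_def by linarith
qed

lemma test_weight_bounds:
  assumes "0 < a" "0 < r"
  shows "0 \<le> test_weight a r" "test_weight a r \<le> 1 / r"
  using reg_inverse_bounds[OF assms] cutoff_bounds[of a r]
    mult_left_le_one_le[of "reg_inverse a r" "cutoff a r"]
  by (auto simp: test_weight_def)

lemma test_weight_ge:
  assumes "0 < a" "2 * a \<le> r" "r \<le> 1/2"
  shows "1 / (2 * r) \<le> test_weight a r"
  using cutoff_eq_1[OF assms] reg_inverse_ge[of a r] assms by (simp add: test_weight_def)

lemma test_weight'_bound:
  assumes "0 < a" "0 < r" "r < 1" "\<And>x. \<bar>smooth_step' x\<bar> \<le> B"
  shows "\<bar>test_weight' a r\<bar> \<le> (6 * B + 1) / r\<^sup>2"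
proof -
  have "\<bar>test_weight' a r\<bar> \<le> \<bar>cutoff' a r\<bar> * reg_inverse a r + cutoff a r * \<bar>reg_inverse' a r\<bar>"
    using reg_inverse_bounds[OF assms(1,2)] cutoff_bounds[of a r]
    unfolding test_weight'_def by (metis abs_mult abs_of_nonneg abs_triangle_ineq)
  also have "\<dots> \<le> (6 * B / r) * (1 / r) + 1 * (1 / r\<^sup>2)"
    using cutoff'_bound[OF assms] reg_inverse_bounds[OF assms(1,2)] cutoff_bounds[of a r]
      reg_inverse'_bound[OF assms(1,2)]
    by (intro add_mono mult_mono) auto
  finally show ?thesis by (simp add: add_divide_distrib power2_eq_square)
qed

lemma lebesgue_integral_FTC_real:
  fixes f F :: "real \<Rightarrow> real"
  assumes "a \<le> b" "\<And>x. x \<in> {a..b} \<Longrightarrow> (F has_real_derivative f x) (at x)"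
    and "continuous_on {a..b} f"
  shows "(LINT x|lebesgue_on {a..b}. f x) = F b - F a"
proof -
  have "(f has_integral F b - F a) {a..b}"
    using assms
    by (intro fundamental_theorem_of_calculus)
       (auto simp: has_real_derivative_iff_has_vector_derivative has_vector_derivative_at_within)
  then show ?thesis
    using lebesgue_integral_eq_integral[OF continuous_imp_integrable_real[OF assms(3)]]
    by (simp add: integral_unique)
qed

lemma integral_inverse_interval:
  fixes a b :: real
  assumes "0 < a" "a \<le> b"
  shows "(LINT x|lebesgue_on {a..b}. 1 / x) = ln (b / a)"
proof -
  have "(LINT x|lebesgue_on {a..b}. 1 / x) = ln b - ln a"
    using assms
    by (intro lebesgue_integral_FTC_real[where F=ln] continuous_intros)
       (auto intro!: derivative_eq_intros simp: field_simps)
  then show ?thesis using assms by (simp add: ln_div)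
qed

lemma nn_integral_inverse_cube_le:
  fixes a b :: real
  assumes "0 < a" "a \<le> b"
  shows "(\<integral>\<^sup>+ x. ennreal (1 / x ^ 3) \<partial>lebesgue_on {a..b}) \<le> ennreal (1 / (2 * a\<^sup>2))"
proof -
  have cont: "continuous_on {a..b} (\<lambda>x::real. 1 / x ^ 3)"
    using assms by (intro continuous_intros) auto
  have "(LINT x|lebesgue_on {a..b}. 1 / x ^ 3) = - 1 / (2 * b\<^sup>2) - - 1 / (2 * a\<^sup>2)"
    using assms
    by (intro lebesgue_integral_FTC_real[where F="\<lambda>x. - 1 / (2 * x\<^sup>2)"] cont)
       (auto intro!: derivative_eq_intros simp: power2_eq_square power3_eq_cube field_simps)
  then have "(LINT x|lebesgue_on {a..b}. 1 / x ^ 3) \<le> 1 / (2 * a\<^sup>2)"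
    by simp
  moreover have "(\<integral>\<^sup>+ x. ennreal (1 / x ^ 3) \<partial>lebesgue_on {a..b})
      = ennreal (LINT x|lebesgue_on {a..b}. 1 / x ^ 3)"
    using assms by (intro nn_integral_eq_integral continuous_imp_integrable_real cont AE_I2) auto
  ultimately show ?thesis by (simp add: ennreal_leI)
qed

lemma ennreal_integral_le_nn_integral:
  fixes f :: "'a \<Rightarrow> real"
  assumes "integrable M f"
  shows "ennreal (integral\<^sup>L M f) \<le> (\<integral>\<^sup>+ x. ennreal (f x) \<partial>M)"
proof -
  have i: "integrable M (\<lambda>x. max (f x) 0)" using assms by auto
  have "ennreal (integral\<^sup>L M f) \<le> ennreal (integral\<^sup>L M (\<lambda>x. max (f x) 0))"
    using assms i by (intro ennreal_leI integral_mono) auto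
  also have "\<dots> = (\<integral>\<^sup>+ x. ennreal (max (f x) 0) \<partial>M)"
    using nn_integral_eq_integral[OF i] by simp
  also have "\<dots> = (\<integral>\<^sup>+ x. ennreal (f x) \<partial>M)"
    by (rule nn_integral_cong) (auto simp: max_def ennreal_neg)
  finally show ?thesis .
qed

lemma integrable_mult_continuous_compact:
  fixes f g :: "'a::euclidean_space \<Rightarrow> real"
  assumes "compact K" "integrable (lebesgue_on K) f" "continuous_on K g"
  shows "integrable (lebesgue_on K) (\<lambda>x. f x * g x)"
proof -
  have K: "K \<in> sets lebesgue" using assms(1) by (simp add: compact_imp_closed)
  obtain B where B: "\<And>x. x \<in> K \<Longrightarrow> \<bar>g x\<bar> \<le> B"
    using compact_imp_bounded[OF compact_continuous_image[OF assms(3,1)]]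
    by (auto simp: bounded_iff)
  show ?thesis
  proof (rule Bochner_Integration.integrable_bound)
    show "integrable (lebesgue_on K) (\<lambda>x. B * f x)" using assms(2) by simp
    show "(\<lambda>x. f x * g x) \<in> borel_measurable (lebesgue_on K)"
      using borel_measurable_integrable[OF assms(2)]
        continuous_imp_measurable_on_sets_lebesgue[OF assms(3) K]
      by measurable
    show "AE x in lebesgue_on K. norm (f x * g x) \<le> norm (B * f x)"
      using B by (intro AE_I2) (simp add: abs_mult,
        metis abs_ge_self abs_ge_zero mult.commute mult_left_mono order_trans)
  qed
qed

subsection \<open>The energy estimate\<close>

lemma weak_deriv_borel_measurable:
  assumes "weak_deriv S f b g" "compact K" "K \<subseteq> S"
  shows "f \<in> borel_measurable (lebesgue_on K)" "g \<in> borel_measurable (lebesgue_on K)"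
  using assms by (auto simp: weak_deriv_def loc_integrable_on_def intro: borel_measurable_integrable)

lemma weak_deriv_pairing:
  fixes S K :: "real set" and \<phi> \<phi>' u u' :: "real \<Rightarrow> real"
  assumes wd: "weak_deriv S u 1 u'" and test: "test_fun S \<phi>"
    and \<phi>': "\<And>x. (\<phi> has_real_derivative \<phi>' x) (at x)" "continuous_on K \<phi>'"
    and K: "compact K" "K \<subseteq> S" and S: "S \<in> sets lebesgue"
    and supp: "\<And>x. x \<notin> K \<Longrightarrow> \<phi> x = 0 \<and> \<phi>' x = 0"
  shows "integrable (lebesgue_on K) (\<lambda>x. u x * \<phi>' x + u' x * \<phi> x)"
    and "(LINT x|lebesgue_on K. u x * \<phi>' x + u' x * \<phi> x) = 0"
proof -
  have Kl: "K \<in> sets lebesgue" using K(1) by (simp add: compact_imp_closed)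
  have "integrable (lebesgue_on K) u" "integrable (lebesgue_on K) u'"
    using wd K unfolding weak_deriv_def loc_integrable_on_def by auto
  moreover have "continuous_on K \<phi>"
    using \<phi>'(1) by (meson DERIV_isCont continuous_at_imp_continuous_on)
  ultimately have i: "integrable (lebesgue_on K) (\<lambda>x. u x * \<phi>' x)"
    "integrable (lebesgue_on K) (\<lambda>x. u' x * \<phi> x)"
    using \<phi>'(2) K(1) by (auto intro: integrable_mult_continuous_compact)
  then show "integrable (lebesgue_on K) (\<lambda>x. u x * \<phi>' x + u' x * \<phi> x)" by simp
  have restrict: "(LINT x|lebesgue_on S. f x) = (LINT x|lebesgue_on K. f x)"
    if "\<And>x. x \<notin> K \<Longrightarrow> f x = 0" for f :: "real \<Rightarrow> real"
  proof -
    have "f = (\<lambda>x. if x \<in> K then f x else 0)" using that by auto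
    then show ?thesis using integral_restrict[OF K(2) Kl S, of f] by simp
  qed
  have "(LINT x|lebesgue_on S. u x * \<phi>' x) = - (LINT x|lebesgue_on S. u' x * \<phi> x)"
    using wd test frechet_derivative_real[OF \<phi>'(1)] unfolding weak_deriv_def by auto
  then have "(LINT x|lebesgue_on K. u x * \<phi>' x) + (LINT x|lebesgue_on K. u' x * \<phi> x) = 0"
    using restrict[of "\<lambda>x. u x * \<phi>' x"] restrict[of "\<lambda>x. u' x * \<phi> x"] supp by simp
  then show "(LINT x|lebesgue_on K. u x * \<phi>' x + u' x * \<phi> x) = 0"
    using i by simp
qed

lemma young_ineq:
  fixes x y e :: real
  assumes "0 < e"
  shows "- (x * y) \<le> e * x\<^sup>2 / 2 + y\<^sup>2 / (2 * e)"
proof -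
  have "0 \<le> (e * x + y)\<^sup>2 / (2 * e)" using assms by simp
  also have "\<dots> = e * x\<^sup>2 / 2 + x * y + y\<^sup>2 / (2 * e)"
    using assms by (simp add: power2_eq_square field_simps)
  finally show ?thesis by simp
qed

lemma young_energy_bound:
  fixes r P D U U' W' h \<beta> C :: real
  assumes r: "0 < r" and P: "0 \<le> P" "P \<le> 1 / r" and D: "\<bar>D\<bar> \<le> C / r\<^sup>2"
    and h: "0 < h" and \<beta>: "0 < \<beta>"
  shows "P - U' * P - U * D
    \<le> (1 + \<beta>/2) / h\<^sup>2 * (U\<^sup>2 / r + r * (U' + W'\<^sup>2 - 1)\<^sup>2 + h\<^sup>2 * (W'\<^sup>2 / r))
       + (1 + C\<^sup>2) * h\<^sup>2 / (2 * \<beta>) / r ^ 3"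
proof -
  define l where "l = \<beta> / h\<^sup>2"
  define g where "g = U' + W'\<^sup>2 - 1"
  have l: "0 < l" using h \<beta> by (simp add: l_def)
  have "P * W'\<^sup>2 \<le> W'\<^sup>2 / r"
    using mult_right_mono[OF P(2), of "W'\<^sup>2"] by simp
  moreover have "- (g * P) \<le> l * r * g\<^sup>2 / 2 + P\<^sup>2 / (2 * (l * r))"
    using young_ineq[of "l * r" g P] l r by simp
  moreover have "- (U * D) \<le> l / r * U\<^sup>2 / 2 + D\<^sup>2 / (2 * (l / r))"
    using young_ineq[of "l / r" U D] l r by simp
  moreover have "P\<^sup>2 / (2 * (l * r)) \<le> 1 / r\<^sup>2 / (2 * (l * r))"
    using power_mono[OF P(2) P(1)] l r by (intro divide_right_mono) (auto simp: power_divide)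
  moreover have "D\<^sup>2 / (2 * (l / r)) \<le> C\<^sup>2 / r ^ 4 / (2 * (l / r))"
    using power_mono[OF D abs_ge_zero, of 2] l r
    by (intro divide_right_mono) (auto simp: power_divide power_mult[symmetric])
  moreover have "1 / r\<^sup>2 / (2 * (l * r)) + C\<^sup>2 / r ^ 4 / (2 * (l / r))
      = (1 + C\<^sup>2) * h\<^sup>2 / (2 * \<beta>) / r ^ 3"
    using r h \<beta> by (simp add: l_def field_simps power2_eq_square power3_eq_cube power4_eq_xxxx)
  moreover have "W'\<^sup>2 / r + (l * r * g\<^sup>2 / 2 + l / r * U\<^sup>2 / 2)
      \<le> (1 + \<beta>/2) / h\<^sup>2 * (U\<^sup>2 / r + r * g\<^sup>2 + h\<^sup>2 * (W'\<^sup>2 / r))"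
  proof -
    have "W'\<^sup>2 / r + (l * r * g\<^sup>2 / 2 + l / r * U\<^sup>2 / 2)
        = 1 / h\<^sup>2 * (h\<^sup>2 * (W'\<^sup>2 / r)) + \<beta> / 2 / h\<^sup>2 * (U\<^sup>2 / r + r * g\<^sup>2)"
      using h r by (simp add: l_def field_simps)
    also have "\<dots> \<le> (1 + \<beta>/2) / h\<^sup>2 * (h\<^sup>2 * (W'\<^sup>2 / r)) + (1 + \<beta>/2) / h\<^sup>2 * (U\<^sup>2 / r + r * g\<^sup>2)"
      using h r \<beta> by (intro add_mono mult_right_mono divide_right_mono) auto
    finally show ?thesis by (simp add: algebra_simps)
  qed
  moreover have "P - U' * P - U * D = P * W'\<^sup>2 + - (g * P) + - (U * D)"
    by (simp add: g_def algebra_simps)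
  ultimately show ?thesis unfolding g_def by linarith
qed

lemma nn_integral_le_energy:
  assumes "K \<subseteq> {0<..<1}" "K \<in> sets lebesgue"
  shows "(\<integral>\<^sup>+ x. ennreal ((u x)\<^sup>2 / x + x * (u1 x + (w1 x)\<^sup>2 - 1)\<^sup>2 + h\<^sup>2 * ((w1 x)\<^sup>2 / x))
      \<partial>lebesgue_on K) \<le> energy h u w u1 w1 w2"
proof -
  let ?F = "\<lambda>x. (u x)\<^sup>2 / x + x * (u1 x + (w1 x)\<^sup>2 - 1)\<^sup>2 + h\<^sup>2 * ((w1 x)\<^sup>2 / x)"
  let ?E = "\<lambda>x. (u x)\<^sup>2 / x + x * (u1 x + (w1 x)\<^sup>2 - 1)\<^sup>2 + h\<^sup>2 * (x * (w2 x)\<^sup>2 + (w1 x)\<^sup>2 / x)"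
  have "ennreal (?F x) * indicator K x \<le> ennreal (?E x) * indicator {0<..<1} x" for x
  proof (cases "x \<in> K")
    case True
    then have "0 < x" "x \<in> {0<..<1}" using assms(1) by auto
    then have "?F x \<le> ?E x" by (intro add_left_mono mult_left_mono) auto
    then show ?thesis using \<open>x \<in> {0<..<1}\<close> True by (simp add: ennreal_leI)
  qed simp
  then have "(\<integral>\<^sup>+ x. ennreal (?F x) * indicator K x \<partial>lebesgue)
      \<le> (\<integral>\<^sup>+ x. ennreal (?E x) * indicator {0<..<1} x \<partial>lebesgue)"
    by (intro nn_integral_mono)
  then show ?thesis
    using assms(2) by (simp add: energy_def nn_integral_restrict_space)
qed

lemma test_weight_integral_ge:
  assumes "0 < h" "h \<le> 1/2"
  shows "ln (1 / h) / 2 \<le> (LINT x|lebesgue_on {h/4..3/4}. test_weight (h/4) x)"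
proof -
  have a: "0 < h/4" using assms by simp
  have "continuous_on {h/4..3/4} (test_weight (h/4))"
    using test_weight_has_derivative[OF a]
    by (meson DERIV_isCont continuous_at_imp_continuous_on)
  then have "(LINT x|lebesgue_on {h/2..1/2}. 1 / (2 * x))
      \<le> (LINT x|lebesgue_on {h/4..3/4}. test_weight (h/4) x)"
    using assms test_weight_ge[OF a] test_weight_bounds[OF a]
    by (intro integral_mono_lebesgue_on_AE continuous_imp_integrable_real AE_I2) auto
  moreover have "(LINT x|lebesgue_on {h/2..1/2}. 1 / (2 * x))
      = (LINT x|lebesgue_on {h/2..1/2}. 1 / x) / 2"
    by (simp add: integral_divide_zero[symmetric] mult.commute)
  moreover have "(LINT x|lebesgue_on {h/2..1/2}. 1 / x) = ln (1 / h)"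
    using integral_inverse_interval[of "h/2" "1/2"] assms by simp
  ultimately show ?thesis by simp
qed

lemma test_weight_pairing:
  assumes a: "0 < a" "a \<le> 3/4" and wu: "weak_deriv {0<..<1} u 1 u1"
  defines "\<Psi> \<equiv> \<lambda>x. test_weight a x - u1 x * test_weight a x - u x * test_weight' a x"
  shows "integrable (lebesgue_on {a..3/4}) \<Psi>"
    and "(LINT x|lebesgue_on {a..3/4}. \<Psi> x) = (LINT x|lebesgue_on {a..3/4}. test_weight a x)"
proof -
  have cont: "continuous_on {a..3/4} (test_weight a)" "continuous_on {a..3/4} (test_weight' a)"
    using test_weight_has_derivative[OF a(1)] Ck_Suc_continuous_deriv[OF Ck_test_weight[OF a(1)]]
    by (auto intro: continuous_on_subset DERIV_isCont continuous_at_imp_continuous_on)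
  have "\<And>x. x \<notin> {a..3/4} \<Longrightarrow> test_weight a x = 0 \<and> test_weight' a x = 0"
    using test_weight_eq_0[OF a(1)] by auto
  moreover have "{a..3/4} \<subseteq> {0<..<1}" using a by auto
  ultimately have i: "integrable (lebesgue_on {a..3/4}) (\<lambda>x. u x * test_weight' a x + u1 x * test_weight a x)"
    and z: "(LINT x|lebesgue_on {a..3/4}. u x * test_weight' a x + u1 x * test_weight a x) = 0"
    using weak_deriv_pairing[OF wu test_fun_test_weight[OF a(1)] test_weight_has_derivative[OF a(1)]
        cont(2) compact_Icc] by auto
  have "\<Psi> = (\<lambda>x. test_weight a x - (u x * test_weight' a x + u1 x * test_weight a x))"
    by (auto simp: \<Psi>_def)
  moreover have "integrable (lebesgue_on {a..3/4}) (test_weight a)"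
    using cont(1) by (rule continuous_imp_integrable_real)
  ultimately show "integrable (lebesgue_on {a..3/4}) \<Psi>"
    and "(LINT x|lebesgue_on {a..3/4}. \<Psi> x) = (LINT x|lebesgue_on {a..3/4}. test_weight a x)"
    using i z by auto
qed

lemma test_weight_pairing_integrand_le:
  fixes h B r U U' W' :: real
  assumes h: "0 < h" "h \<le> 1/2" and r: "h/4 \<le> r" "r < 1" and B: "\<And>x. \<bar>smooth_step' x\<bar> \<le> B"
  shows "test_weight (h/4) r - U' * test_weight (h/4) r - U * test_weight' (h/4) r
    \<le> (1 + 16 * (1 + (6 * B + 1)\<^sup>2)) / h\<^sup>2 * (U\<^sup>2 / r + r * (U' + W'\<^sup>2 - 1)\<^sup>2 + h\<^sup>2 * (W'\<^sup>2 / r))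
      + h\<^sup>2 / 64 * (1 / r ^ 3)"
proof -
  define C where "C = 6 * B + 1"
  have a: "0 < h/4" and "0 < r" using h r by auto
  have "\<bar>test_weight' (h/4) r\<bar> \<le> C / r\<^sup>2"
    using test_weight'_bound[OF a _ r(2) B] \<open>0 < r\<close> by (simp add: C_def)
  \<comment> \<open>the Young weight is chosen so that the constant in front of \<open>1/r\<^sup>3\<close> becomes \<open>h\<^sup>2/64\<close>\<close>
  moreover have "0 < 1 + C\<^sup>2" by (simp add: add_pos_nonneg)
  ultimately have "test_weight (h/4) r - U' * test_weight (h/4) r - U * test_weight' (h/4) r
      \<le> (1 + 32 * (1 + C\<^sup>2) / 2) / h\<^sup>2 * (U\<^sup>2 / r + r * (U' + W'\<^sup>2 - 1)\<^sup>2 + h\<^sup>2 * (W'\<^sup>2 / r))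
        + (1 + C\<^sup>2) * h\<^sup>2 / (2 * (32 * (1 + C\<^sup>2))) / r ^ 3"
    using test_weight_bounds[OF a \<open>0 < r\<close>] \<open>0 < r\<close> h by (intro young_energy_bound) auto
  also have "(1 + C\<^sup>2) * h\<^sup>2 / (2 * (32 * (1 + C\<^sup>2))) = h\<^sup>2 / 64"
    using \<open>0 < 1 + C\<^sup>2\<close> by (simp add: field_simps)
  also have "1 + 32 * (1 + C\<^sup>2) / 2 = 1 + 16 * (1 + (6 * B + 1)\<^sup>2)"
    by (simp add: C_def)
  finally show ?thesis by simp
qed

lemma test_weight_integral_le_energy:
  fixes h B :: real
  assumes h: "0 < h" "h \<le> 1/2"
    and wu: "weak_deriv {0<..<1} u 1 u1" and ww: "weak_deriv {0<..<1} w 1 w1"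
    and B: "\<And>x. \<bar>smooth_step' x\<bar> \<le> B"
  shows "ennreal (LINT x|lebesgue_on {h/4..3/4}. test_weight (h/4) x)
    \<le> ennreal ((1 + 16 * (1 + (6 * B + 1)\<^sup>2)) / h\<^sup>2) * energy h u w u1 w1 w2 + ennreal (1/8)"
proof -
  define K where "K = {h/4..3/4}"
  define c where "c = (1 + 16 * (1 + (6 * B + 1)\<^sup>2)) / h\<^sup>2"
  define F where "F x = (u x)\<^sup>2 / x + x * (u1 x + (w1 x)\<^sup>2 - 1)\<^sup>2 + h\<^sup>2 * ((w1 x)\<^sup>2 / x)" for x
  define \<Psi> where "\<Psi> x = test_weight (h/4) x - u1 x * test_weight (h/4) x - u x * test_weight' (h/4) x" for x
  have K: "K \<subseteq> {0<..<1}" "K \<in> sets lebesgue" using h by (auto simp: K_def)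
  have "integrable (lebesgue_on K) \<Psi>"
    and "(LINT x|lebesgue_on K. \<Psi> x) = (LINT x|lebesgue_on K. test_weight (h/4) x)"
    using test_weight_pairing[of "h/4" u u1] h wu by (simp_all add: K_def \<Psi>_def[abs_def])
  then have "ennreal (LINT x|lebesgue_on K. test_weight (h/4) x) \<le> (\<integral>\<^sup>+ x. ennreal (\<Psi> x) \<partial>lebesgue_on K)"
    using ennreal_integral_le_nn_integral by metis
  also have "\<dots> \<le> (\<integral>\<^sup>+ x. ennreal c * ennreal (F x) + ennreal (h\<^sup>2 / 64) * ennreal (1 / x ^ 3)
      \<partial>lebesgue_on K)"
  proof (rule nn_integral_mono)
    fix x assume "x \<in> space (lebesgue_on K)"
    then have x: "h/4 \<le> x" "x < 1" using h by (auto simp: K_def)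
    then have "\<Psi> x \<le> c * F x + h\<^sup>2 / 64 * (1 / x ^ 3)" and "0 \<le> F x"
      using test_weight_pairing_integrand_le[OF h x B] h by (simp_all add: \<Psi>_def F_def c_def)
    then show "ennreal (\<Psi> x) \<le> ennreal c * ennreal (F x) + ennreal (h\<^sup>2 / 64) * ennreal (1 / x ^ 3)"
      using x h by (simp add: c_def ennreal_mult'[symmetric] ennreal_plus[symmetric] ennreal_leI
          del: ennreal_plus)
  qed
  also have "\<dots> = ennreal c * (\<integral>\<^sup>+ x. ennreal (F x) \<partial>lebesgue_on K)
      + ennreal (h\<^sup>2 / 64) * (\<integral>\<^sup>+ x. ennreal (1 / x ^ 3) \<partial>lebesgue_on K)"
  proof -
    have "compact K" by (simp add: K_def)
    then have "u \<in> borel_measurable (lebesgue_on K)" "u1 \<in> borel_measurable (lebesgue_on K)"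
      "w1 \<in> borel_measurable (lebesgue_on K)"
      using weak_deriv_borel_measurable[OF wu] weak_deriv_borel_measurable[OF ww] K(1) by auto
    moreover have "(\<lambda>x::real. x) \<in> borel_measurable (lebesgue_on K)"
      using continuous_imp_measurable_on_sets_lebesgue[OF continuous_on_id K(2)] by simp
    ultimately show ?thesis
      unfolding F_def[abs_def] by (simp add: nn_integral_add nn_integral_cmult)
  qed
  also have "\<dots> \<le> ennreal c * energy h u w u1 w1 w2 + ennreal (h\<^sup>2 / 64) * ennreal (1 / (2 * (h/4)\<^sup>2))"
  proof -
    have "(\<integral>\<^sup>+ x. ennreal (F x) \<partial>lebesgue_on K) \<le> energy h u w u1 w1 w2"
      unfolding F_def by (rule nn_integral_le_energy[OF K])
    then have "ennreal c * (\<integral>\<^sup>+ x. ennreal (F x) \<partial>lebesgue_on K) \<le> ennreal c * energy h u w u1 w1 w2"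
      by (rule mult_left_mono) simp
    moreover have "(\<integral>\<^sup>+ x. ennreal (1 / x ^ 3) \<partial>lebesgue_on K) \<le> ennreal (1 / (2 * (h/4)\<^sup>2))"
      unfolding K_def using h by (intro nn_integral_inverse_cube_le) auto
    then have "ennreal (h\<^sup>2 / 64) * (\<integral>\<^sup>+ x. ennreal (1 / x ^ 3) \<partial>lebesgue_on K)
        \<le> ennreal (h\<^sup>2 / 64) * ennreal (1 / (2 * (h/4)\<^sup>2))"
      by (rule mult_left_mono) simp
    ultimately show ?thesis by (rule add_mono)
  qed
  also have "ennreal (h\<^sup>2 / 64) * ennreal (1 / (2 * (h/4)\<^sup>2)) = ennreal (1/8)"
    using h by (simp add: ennreal_mult'[symmetric] field_simps power2_eq_square)
  finally show ?thesis by (simp add: K_def c_def)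
qed

lemma energy_lower_bound:
  fixes h B :: real
  assumes h: "0 < h" "h \<le> 1/2"
    and wu: "weak_deriv {0<..<1} u 1 u1" and ww: "weak_deriv {0<..<1} w 1 w1"
    and B: "\<And>x. \<bar>smooth_step' x\<bar> \<le> B"
  shows "ennreal (h\<^sup>2 * ln (1 / h)) \<le> ennreal (4 + 64 * (1 + (6 * B + 1)\<^sup>2)) * energy h u w u1 w1 w2"
proof -
  define c where "c = (1 + 16 * (1 + (6 * B + 1)\<^sup>2)) / h\<^sup>2"
  define E where "E = energy h u w u1 w1 w2"
  have "ln 2 \<le> ln (1 / h)" using h by (simp add: field_simps)
  then have "1/2 \<le> ln (1 / h)" using ln2_ge_two_thirds by linarith
  then have "ennreal (ln (1 / h) / 4) + ennreal (1/8) \<le> ennreal (ln (1 / h) / 2)"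
    by (simp add: ennreal_plus[symmetric] del: ennreal_plus)
  also have "\<dots> \<le> ennreal c * E + ennreal (1/8)"
    using test_weight_integral_ge[OF h] test_weight_integral_le_energy[OF h wu ww B]
    unfolding c_def E_def by (meson ennreal_leI order_trans)
  finally have "ennreal (ln (1 / h) / 4) \<le> ennreal c * E"
    by (simp add: ennreal_add_left_cancel_le add.commute[of _ "ennreal (1/8)"])
  then have "ennreal (4 * h\<^sup>2) * ennreal (ln (1 / h) / 4) \<le> ennreal (4 * h\<^sup>2) * (ennreal c * E)"
    by (rule mult_left_mono) simp
  moreover have "ennreal (4 * h\<^sup>2) * ennreal (ln (1 / h) / 4) = ennreal (h\<^sup>2 * ln (1 / h))"
    using \<open>1/2 \<le> ln (1 / h)\<close> by (simp add: ennreal_mult[symmetric])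
  moreover have "ennreal (4 * h\<^sup>2) * (ennreal c * E) = ennreal (4 * h\<^sup>2 * c) * E"
    by (simp add: ennreal_mult' mult.assoc)
  moreover have "4 * h\<^sup>2 * c = 4 + 64 * (1 + (6 * B + 1)\<^sup>2)"
    using h by (simp add: c_def field_simps)
  ultimately show ?thesis by (simp add: E_def)
qed

theorem lemma3p8:
  "\<exists>C>0. \<forall>\<delta> h u w u1 w1 w2.
     0 \<le> \<delta> \<and> \<delta> \<le> 1 \<and> 0 < h \<and> h \<le> 1/2 \<and> admissible \<delta> u w
     \<and> weak_deriv {0<..<1} u 1 u1 \<and> weak_deriv {0<..<1} w 1 w1
     \<and> weak_deriv {0<..<1} w1 1 w2
     \<longrightarrow> ennreal (h\<^sup>2 * ln (1/h)) \<le> ennreal C * energy h u w u1 w1 w2"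
proof -
  obtain B where "\<And>x. \<bar>smooth_step' x\<bar> \<le> B" by (rule smooth_step'_bounded) blast
  then show ?thesis
    using energy_lower_bound by (intro exI[of _ "4 + 64 * (1 + (6 * B + 1)\<^sup>2)"]) (auto simp: add_pos_nonneg)
qed

end
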